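(* Let $1<w\le 2$ and $1<h\le 2$, let $n\ge 2$ and $\frac12\le y_1<\dots<y_n\le h-\frac12$. In every reasonable layout of this instance, the bottom square is not contained in the bounding box of the other squares.
   Context: The instance is the strip $T=[0,w]\times[0,h]$ with the given $y_i$. A layout is a pair $(\mathbf x,\prec)$ where $\mathbf x=(x_1,\dots,x_n)$ with $x_i\in[\frac12,w-\frac12]$, and $\prec$ is a total order (stacking order) on the squares $s_1,\dots,s_n$, where $s_i$ is the closed axis-parallel unit square with centre $(x_i,y_i)$. If $s_i\prec s_j$ we say $s_j$ is in front of $s_i$ and $s_i$ is behind $s_j$; the bottom square is the $\prec$-minimal square. A point $p$ on the boundary of $s_i$ is visible if every square $s_j$ ($j\neq i$) containing $p$ is behind $s_i$. The visible perimeter of $s_i$ is the total length of its visible boundary points; the gap of $s_i$ is its visible perimeter minus $2$, the gap of a layout is the minimum of the gaps of its squares, and a layout is reasonable if its gap is positive. The bounding box of a collection of squares is the smallest axis-parallel rectangle containing them. *)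

theory Defs
  imports "HOL-Analysis.Analysis"
begin

text \<open>Squares are indexed by 0..<n (paper: 1..n). The stacking order is given by an
injective rank function r on {..<n}: s_i is behind s_j iff r i < r j.\<close>

definition usq :: "real \<Rightarrow> real \<Rightarrow> (real \<times> real) set" where
  "usq a b = cbox (a - 1/2, b - 1/2) (a + 1/2, b + 1/2)"

definition visible_pt ::
  "nat \<Rightarrow> (nat \<Rightarrow> real) \<Rightarrow> (nat \<Rightarrow> real) \<Rightarrow> (nat \<Rightarrow> nat) \<Rightarrow> nat \<Rightarrow> real \<times> real \<Rightarrow> bool" where
  "visible_pt n x y r i p \<longleftrightarrow>
     p \<in> frontier (usq (x i) (y i)) \<and>
     (\<forall>j<n. j \<noteq> i \<and> p \<in> usq (x j) (y j) \<longrightarrow> r j < r i)"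

definition visible_perimeter ::
  "nat \<Rightarrow> (nat \<Rightarrow> real) \<Rightarrow> (nat \<Rightarrow> real) \<Rightarrow> (nat \<Rightarrow> nat) \<Rightarrow> nat \<Rightarrow> real" where
  "visible_perimeter n x y r i =
     measure lborel {t\<in>{0..1}. visible_pt n x y r i (x i - 1/2 + t, y i - 1/2)}
   + measure lborel {t\<in>{0..1}. visible_pt n x y r i (x i - 1/2 + t, y i + 1/2)}
   + measure lborel {t\<in>{0..1}. visible_pt n x y r i (x i - 1/2, y i - 1/2 + t)}
   + measure lborel {t\<in>{0..1}. visible_pt n x y r i (x i + 1/2, y i - 1/2 + t)}"

definition gap_sq ::
  "nat \<Rightarrow> (nat \<Rightarrow> real) \<Rightarrow> (nat \<Rightarrow> real) \<Rightarrow> (nat \<Rightarrow> nat) \<Rightarrow> nat \<Rightarrow> real" where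
  "gap_sq n x y r i = visible_perimeter n x y r i - 2"

definition layout_gap ::
  "nat \<Rightarrow> (nat \<Rightarrow> real) \<Rightarrow> (nat \<Rightarrow> real) \<Rightarrow> (nat \<Rightarrow> nat) \<Rightarrow> real" where
  "layout_gap n x y r = Min ((gap_sq n x y r) ` {..<n})"

definition is_layout ::
  "real \<Rightarrow> nat \<Rightarrow> (nat \<Rightarrow> real) \<Rightarrow> (nat \<Rightarrow> nat) \<Rightarrow> bool" where
  "is_layout w n x r \<longleftrightarrow> (\<forall>i<n. 1/2 \<le> x i \<and> x i \<le> w - 1/2) \<and> inj_on r {..<n}"

definition reasonable ::
  "nat \<Rightarrow> (nat \<Rightarrow> real) \<Rightarrow> (nat \<Rightarrow> real) \<Rightarrow> (nat \<Rightarrow> nat) \<Rightarrow> bool" where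
  "reasonable n x y r \<longleftrightarrow> layout_gap n x y r > 0"

definition bounding_box :: "(real \<times> real) set \<Rightarrow> (real \<times> real) set" where
  "bounding_box S = \<Inter> {cbox a b | a b. S \<subseteq> cbox a b}"

end

theory Submission imports Defs begin

text \<open>Since w, h \<le> 2, all centres lie in a unit box, so every square meets the closed bottom
square s_b, and each other square hides, on every edge of s_b facing it, all but a piece of
length at most its offset from s_b along that edge. If s_b lies in the bounding box of the
others, there are squares below, above, left and right of (or level with) its centre. Either
two of them hide a whole edge each while every other edge shows at most 1, or the four
visible pieces add up to (x_i - x_j) + (y_j - y_i) \<le> (w - 1) + (h - 1) \<le> 2 for a square s_i
below and a square s_j above. In both cases the gap of s_b is not positive.\<close>

lemma usq_mem:
  "(p1, p2) \<in> usq a c \<longleftrightarrow> a - 1/2 \<le> p1 \<and> p1 \<le> a + 1/2 \<and> c - 1/2 \<le> p2 \<and> p2 \<le> c + 1/2"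
  by (simp add: usq_def cbox_Pair_eq)

lemma measure_lborel_le_interval:
  fixes V :: "real set"
  assumes "V \<subseteq> {s..t}" "s \<le> t"
  shows "measure lborel V \<le> t - s"
proof -
  have "emeasure lborel V \<le> ennreal (t - s)"
    using emeasure_mono[OF assms(1), of lborel] assms(2) by simp
  then show ?thesis
    unfolding measure_def using assms(2) by (intro enn2real_leI) simp_all
qed

lemma measure_outside_unit_interval_le:
  fixes V :: "real set"
  assumes "V \<subseteq> {0..1} - {a..a + 1}"
  shows "measure lborel V \<le> \<bar>a\<bar>"
proof -
  define s where "s = (if 0 \<le> a then 0 else a + 1)"
  have "V \<subseteq> {s..s + \<bar>a\<bar>}" using assms by (auto simp: s_def)
  then show ?thesis by (rule measure_lborel_le_interval[THEN order_trans]) auto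
qed

lemma subset_outside_two_shifts_empty:
  fixes V :: "real set"
  assumes "V \<subseteq> {0..1} - {a..a + 1}" "V \<subseteq> {0..1} - {a'..a' + 1}" "a \<le> 0" "0 \<le> a'" "a' \<le> a + 1"
  shows "V = {}"
  using assms by force

lemma bounding_box_subset_cbox: "S \<subseteq> cbox a b \<Longrightarrow> bounding_box S \<subseteq> cbox a b"
  unfolding bounding_box_def by blast

lemma UN_usq_subset_cbox:
  assumes "finite J"
  shows "(\<Union>j\<in>J. usq (x j) (y j))
           \<subseteq> cbox (Min (x ` J) - 1/2, Min (y ` J) - 1/2) (Max (x ` J) + 1/2, Max (y ` J) + 1/2)"
proof (clarsimp simp: cbox_Pair_eq)
  fix j p1 p2
  assume "j \<in> J" "(p1, p2) \<in> usq (x j) (y j)"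
  moreover have "Min (x ` J) \<le> x j" "x j \<le> Max (x ` J)" "Min (y ` J) \<le> y j" "y j \<le> Max (y ` J)"
    using assms \<open>j \<in> J\<close> by simp_all
  ultimately show "Min (x ` J) - 1/2 \<le> p1 \<and> p1 \<le> Max (x ` J) + 1/2 \<and>
                   Min (y ` J) - 1/2 \<le> p2 \<and> p2 \<le> Max (y ` J) + 1/2"
    by (auto simp: usq_mem)
qed

lemma usq_subset_bounding_box_UN_usq:
  assumes "finite J" "usq X Y \<subseteq> bounding_box (\<Union>j\<in>J. usq (x j) (y j))"
  shows "Min (x ` J) \<le> X \<and> X \<le> Max (x ` J) \<and> Min (y ` J) \<le> Y \<and> Y \<le> Max (y ` J)"
proof -
  have box: "usq X Y \<subseteq> cbox (Min (x ` J) - 1/2, Min (y ` J) - 1/2) (Max (x ` J) + 1/2, Max (y ` J) + 1/2)"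
    using assms(2) bounding_box_subset_cbox[OF UN_usq_subset_cbox[OF assms(1)]] by blast
  have "(X - 1/2, Y - 1/2) \<in> usq X Y" "(X + 1/2, Y + 1/2) \<in> usq X Y"
    by (simp_all add: usq_mem)
  then show ?thesis using box by (auto simp: cbox_Pair_eq)
qed

lemma usq_subset_bounding_box_UN_usqE:
  assumes "finite J" "J \<noteq> {}" "usq X Y \<subseteq> bounding_box (\<Union>j\<in>J. usq (x j) (y j))"
  obtains i j k l where "i \<in> J" "j \<in> J" "k \<in> J" "l \<in> J"
    and "y i \<le> Y" "Y \<le> y j" "x k \<le> X" "X \<le> x l"
proof -
  have images: "finite (x ` J)" "x ` J \<noteq> {}" "finite (y ` J)" "y ` J \<noteq> {}"
    using assms(1,2) by simp_all
  obtain i where i: "i \<in> J" "y i = Min (y ` J)" using Min_in[OF images(3,4)] by (metis imageE)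
  obtain j where j: "j \<in> J" "y j = Max (y ` J)" using Max_in[OF images(3,4)] by (metis imageE)
  obtain k where k: "k \<in> J" "x k = Min (x ` J)" using Min_in[OF images(1,2)] by (metis imageE)
  obtain l where l: "l \<in> J" "x l = Max (x ` J)" using Max_in[OF images(1,2)] by (metis imageE)
  show ?thesis
    by (rule that[OF i(1) j(1) k(1) l(1)])
      (use i(2) j(2) k(2) l(2) usq_subset_bounding_box_UN_usq[OF assms(1,3)] in linarith)+
qed

lemma visible_pt_bottom_notin_usq:
  assumes "\<forall>j<n. j \<noteq> b \<longrightarrow> r b < r j" "visible_pt n x y r b p" "q < n" "q \<noteq> b"
  shows "p \<notin> usq (x q) (y q)"
  using assms unfolding visible_pt_def by force

text \<open>VB, VT, VL, VR are the visible parameters in [0, 1] of the bottom, top, left and right edge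
of a unit square; a square q at offset (a q, c q) from it hides [a q, a q + 1] on the horizontal
edge and [c q, c q + 1] on the vertical edge that it reaches.\<close>

lemma unit_square_edges_measure_le_2:
  fixes VB VT VL VR :: "real set" and a c :: "'q \<Rightarrow> real"
  assumes cover_B: "\<And>q. q \<in> Q \<Longrightarrow> c q \<le> 0 \<Longrightarrow> VB \<subseteq> {0..1} - {a q..a q + 1}"
    and cover_T: "\<And>q. q \<in> Q \<Longrightarrow> 0 \<le> c q \<Longrightarrow> VT \<subseteq> {0..1} - {a q..a q + 1}"
    and cover_L: "\<And>q. q \<in> Q \<Longrightarrow> a q \<le> 0 \<Longrightarrow> VL \<subseteq> {0..1} - {c q..c q + 1}"
    and cover_R: "\<And>q. q \<in> Q \<Longrightarrow> 0 \<le> a q \<Longrightarrow> VR \<subseteq> {0..1} - {c q..c q + 1}"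
    and near: "\<And>q. q \<in> Q \<Longrightarrow> \<bar>a q\<bar> \<le> 1 \<and> \<bar>c q\<bar> \<le> 1"
    and spread: "\<And>q q'. q \<in> Q \<Longrightarrow> q' \<in> Q \<Longrightarrow> a q - a q' \<le> 1 \<and> c q - c q' \<le> 1"
    and i: "i \<in> Q" "c i \<le> 0" and j: "j \<in> Q" "0 \<le> c j"
    and k: "k \<in> Q" "a k \<le> 0" and l: "l \<in> Q" "0 \<le> a l"
  shows "measure lborel VB + measure lborel VT + measure lborel VL + measure lborel VR \<le> 2"
proof -
  note edge_le = measure_outside_unit_interval_le
  note edge_empty = subset_outside_two_shifts_empty
  have bounds: "measure lborel VB \<le> 1" "measure lborel VT \<le> 1"
      "measure lborel VL \<le> 1" "measure lborel VR \<le> 1"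
    using edge_le[OF cover_B[OF i]] edge_le[OF cover_T[OF j]] edge_le[OF cover_L[OF k]]
      edge_le[OF cover_R[OF l]] near[OF i(1)] near[OF j(1)] near[OF k(1)] near[OF l(1)]
    by linarith+
  consider "0 \<le> a i" "0 \<le> a j" | "a i \<le> 0" "a j \<le> 0" | "0 \<le> a i" "a j \<le> 0" | "a i \<le> 0" "0 \<le> a j"
    by linarith
  then show ?thesis
  proof cases
    case 1
    have "VR = {}"
      by (rule edge_empty[OF cover_R[OF i(1) 1(1)] cover_R[OF j(1) 1(2)]])
        (use i j spread[OF j(1) i(1)] in auto)
    moreover have "VB = {} \<or> VT = {}"
    proof (cases "c k \<le> 0")
      case True
      have "VB = {}"
        by (rule edge_empty[OF cover_B[OF k(1) True] cover_B[OF i]]) (use k 1 spread[OF i(1) k(1)] in auto)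
      then show ?thesis ..
    next
      case False
      have "VT = {}"
        by (rule edge_empty[OF cover_T[OF k(1)] cover_T[OF j]]) (use k 1 False spread[OF j(1) k(1)] in auto)
      then show ?thesis ..
    qed
    ultimately show ?thesis using bounds by auto
  next
    case 2
    have "VL = {}"
      by (rule edge_empty[OF cover_L[OF i(1) 2(1)] cover_L[OF j(1) 2(2)]])
        (use i j spread[OF j(1) i(1)] in auto)
    moreover have "VB = {} \<or> VT = {}"
    proof (cases "c l \<le> 0")
      case True
      have "VB = {}"
        by (rule edge_empty[OF cover_B[OF i] cover_B[OF l(1) True]]) (use l 2 spread[OF l(1) i(1)] in auto)
      then show ?thesis ..
    next
      case False
      have "VT = {}"
        by (rule edge_empty[OF cover_T[OF j] cover_T[OF l(1)]]) (use l 2 False spread[OF l(1) j(1)] in auto)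
      then show ?thesis ..
    qed
    ultimately show ?thesis using bounds by auto
  next
    case 3
    have "measure lborel VB \<le> a i" "measure lborel VT \<le> - a j"
        "measure lborel VL \<le> c j" "measure lborel VR \<le> - c i"
      using edge_le[OF cover_B[OF i]] edge_le[OF cover_T[OF j]]
        edge_le[OF cover_L[OF j(1) 3(2)]] edge_le[OF cover_R[OF i(1) 3(1)]] 3 i j by auto
    then show ?thesis using spread[OF i(1) j(1)] spread[OF j(1) i(1)] by linarith
  next
    case 4
    have "measure lborel VB \<le> - a i" "measure lborel VT \<le> a j"
        "measure lborel VL \<le> - c i" "measure lborel VR \<le> c j"
      using edge_le[OF cover_B[OF i]] edge_le[OF cover_T[OF j]]
        edge_le[OF cover_L[OF i(1) 4(1)]] edge_le[OF cover_R[OF j(1) 4(2)]] 4 i j by auto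
    then show ?thesis using spread[OF j(1) i(1)] by linarith
  qed
qed

lemma bottom_visible_perimeter_le_2:
  assumes bottom: "\<forall>j<n. j \<noteq> b \<longrightarrow> r b < r j"
    and window: "\<forall>q<n. x0 \<le> x q \<and> x q \<le> x0 + 1 \<and> y0 \<le> y q \<and> y q \<le> y0 + 1"
    and "b < n" and others: "i \<in> {..<n} - {b}" "j \<in> {..<n} - {b}" "k \<in> {..<n} - {b}" "l \<in> {..<n} - {b}"
    and sides: "y i \<le> y b" "y b \<le> y j" "x k \<le> x b" "x b \<le> x l"
  shows "visible_perimeter n x y r b \<le> 2"
proof -
  define X Y where "X = x b" and "Y = y b"
  define VB where "VB = {t\<in>{0..1}. visible_pt n x y r b (X - 1/2 + t, Y - 1/2)}"
  define VT where "VT = {t\<in>{0..1}. visible_pt n x y r b (X - 1/2 + t, Y + 1/2)}"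
  define VL where "VL = {t\<in>{0..1}. visible_pt n x y r b (X - 1/2, Y - 1/2 + t)}"
  define VR where "VR = {t\<in>{0..1}. visible_pt n x y r b (X + 1/2, Y - 1/2 + t)}"
  have perimeter: "visible_perimeter n x y r b =
      measure lborel VB + measure lborel VT + measure lborel VL + measure lborel VR"
    by (simp add: visible_perimeter_def VB_def VT_def VL_def VR_def X_def Y_def)
  have spread: "x q - x q' \<le> 1 \<and> y q - y q' \<le> 1" if "q < n" "q' < n" for q q'
    using window[rule_format, OF that(1)] window[rule_format, OF that(2)] by auto
  have near: "\<bar>x q - X\<bar> \<le> 1 \<and> \<bar>y q - Y\<bar> \<le> 1" if "q < n" for q
    using spread[OF that \<open>b < n\<close>] spread[OF \<open>b < n\<close> that] by (auto simp: X_def Y_def)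
  have hidden: "p \<notin> usq (x q) (y q)" if "visible_pt n x y r b p" "q \<in> {..<n} - {b}" for p q
    using visible_pt_bottom_notin_usq[OF bottom that(1)] that(2) by blast
  show ?thesis
    unfolding perimeter
  proof (rule unit_square_edges_measure_le_2[where Q = "{..<n} - {b}" and a = "\<lambda>q. x q - X"
        and c = "\<lambda>q. y q - Y" and i = i and j = j and k = k and l = l])
    fix q assume q: "q \<in> {..<n} - {b}"
    show "y q - Y \<le> 0 \<Longrightarrow> VB \<subseteq> {0..1} - {x q - X..x q - X + 1}"
      using hidden[OF _ q] near[of q] q by (fastforce simp: VB_def usq_mem abs_le_iff)
    show "0 \<le> y q - Y \<Longrightarrow> VT \<subseteq> {0..1} - {x q - X..x q - X + 1}"
      using hidden[OF _ q] near[of q] q by (fastforce simp: VT_def usq_mem abs_le_iff)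
    show "x q - X \<le> 0 \<Longrightarrow> VL \<subseteq> {0..1} - {y q - Y..y q - Y + 1}"
      using hidden[OF _ q] near[of q] q by (fastforce simp: VL_def usq_mem abs_le_iff)
    show "0 \<le> x q - X \<Longrightarrow> VR \<subseteq> {0..1} - {y q - Y..y q - Y + 1}"
      using hidden[OF _ q] near[of q] q by (fastforce simp: VR_def usq_mem abs_le_iff)
  qed (use near spread others sides in \<open>auto simp: X_def Y_def\<close>)
qed

theorem proposition3:
  fixes w h :: real and n :: nat and y x :: "nat \<Rightarrow> real" and r :: "nat \<Rightarrow> nat" and b :: nat
  assumes "1 < w" "w \<le> 2" "1 < h" "h \<le> 2" "n \<ge> 2"
    and "\<forall>i<n. 1/2 \<le> y i \<and> y i \<le> h - 1/2"
    and "\<forall>i j. i < j \<and> j < n \<longrightarrow> y i < y j"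
    and "is_layout w n x r"
    and "reasonable n x y r"
    and "b < n" and "\<forall>j<n. j \<noteq> b \<longrightarrow> r b < r j"
  shows "\<not> usq (x b) (y b) \<subseteq> bounding_box (\<Union>j\<in>{..<n} - {b}. usq (x j) (y j))"
proof
  define J where "J = {..<n} - {b}"
  have "finite J" by (simp add: J_def)
  have "(if b = 0 then 1 else 0) \<in> J" using assms(5,10) by (auto simp: J_def)
  then have "J \<noteq> {}" by blast
  assume "usq (x b) (y b) \<subseteq> bounding_box (\<Union>j\<in>{..<n} - {b}. usq (x j) (y j))"
  then have "usq (x b) (y b) \<subseteq> bounding_box (\<Union>j\<in>J. usq (x j) (y j))"
    by (simp only: J_def)
  then obtain i j k l where "i \<in> J" "j \<in> J" "k \<in> J" "l \<in> J"
      and sides: "y i \<le> y b" "y b \<le> y j" "x k \<le> x b" "x b \<le> x l"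
    by (rule usq_subset_bounding_box_UN_usqE[OF \<open>finite J\<close> \<open>J \<noteq> {}\<close>])
  have window: "\<forall>q<n. 1/2 \<le> x q \<and> x q \<le> 1/2 + 1 \<and> 1/2 \<le> y q \<and> y q \<le> 1/2 + 1"
    using assms(2,4,6,8) unfolding is_layout_def by force
  have "visible_perimeter n x y r b \<le> 2"
    using \<open>i \<in> J\<close> \<open>j \<in> J\<close> \<open>k \<in> J\<close> \<open>l \<in> J\<close> unfolding J_def
    by (rule bottom_visible_perimeter_le_2[OF assms(11) window assms(10) _ _ _ _ sides])
  moreover have "layout_gap n x y r \<le> gap_sq n x y r b"
    unfolding layout_gap_def using assms(10) by (intro Min_le) auto
  ultimately show False using assms(9) by (simp add: reasonable_def gap_sq_def)
qed

end
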